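(* Let $\mu=\sum_{i=1}^m a_i\delta_{u_i}$ and $\nu=\sum_{j=1}^n b_j\delta_{v_j}$ be finitely supported finite measures on $S^2\subset\mathbb{R}^3$ (with $a_i,b_j>0$). Then $$\operatorname{WFR}(\mu,\nu)^2=\inf_{(A,B)\in\mathcal A(\mu,\nu)}\sum_{i=0}^m\sum_{j=0}^n\big|\sqrt{A_{ij}}\,u_i-\sqrt{B_{ij}}\,v_j\big|^2,$$ where $u_0=v_0=(1,0,0)$.
   Context: For finite Borel measures $\mu,\nu$ on $S^2$, $\Gamma(\mu,\nu)$ is the set of pairs $(\gamma_0,\gamma_1)$ of finite Borel measures on $S^2\times S^2$ with $(\operatorname{Proj}_0)_\#\gamma_0=\mu$, $(\operatorname{Proj}_1)_\#\gamma_1=\nu$, and the Wasserstein–Fisher–Rao distance is $\operatorname{WFR}(\mu,\nu)=\inf_{(\gamma_0,\gamma_1)\in\Gamma(\mu,\nu)}\big(\int|\sqrt{\tfrac{d\gamma_0}{d\gamma}(u,v)}u-\sqrt{\tfrac{d\gamma_1}{d\gamma}(u,v)}v|^2d\gamma(u,v)\big)^{1/2}$ with $\gamma$ any measure such that $\gamma_0,\gamma_1\ll\gamma$. $\mathcal A(\mu,\nu)$ is the set of pairs $(A,B)$ of $(m+1)\times(n+1)$ matrices (indices from $0$) with $A_{ij},B_{ij}\ge0$, $a_i=\sum_{j=0}^nA_{ij}$ ($i\ge1$), $A_{0j}=0$ for all $j$, $b_j=\sum_{i=0}^mB_{ij}$ ($j\ge1$), $B_{i0}=0$ for all $i$. 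*)

theory Defs
  imports "HOL-Analysis.Analysis"
begin

definition S2 :: "(real^3) set" where
  "S2 = sphere 0 1"

definition S2B :: "(real^3) measure" where
  "S2B = restrict_space borel S2"

definition Gamma :: "(real^3) measure \<Rightarrow> (real^3) measure
    \<Rightarrow> (((real^3) \<times> (real^3)) measure \<times> ((real^3) \<times> (real^3)) measure) set" where
  "Gamma \<mu> \<nu> = {(\<gamma>0, \<gamma>1).
      sets \<gamma>0 = sets (S2B \<Otimes>\<^sub>M S2B) \<and> sets \<gamma>1 = sets (S2B \<Otimes>\<^sub>M S2B) \<and>
      finite_measure \<gamma>0 \<and> finite_measure \<gamma>1 \<and>
      distr \<gamma>0 S2B fst = \<mu> \<and> distr \<gamma>1 S2B snd = \<nu>}"

definition wfr_cost :: "((real^3) \<times> (real^3)) measure \<Rightarrow> ((real^3) \<times> (real^3)) measure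
    \<Rightarrow> ((real^3) \<times> (real^3)) measure \<Rightarrow> ennreal" where
  "wfr_cost \<gamma> \<gamma>0 \<gamma>1 =
     (\<integral>\<^sup>+ p. ennreal ((norm (sqrt (enn2real (RN_deriv \<gamma> \<gamma>0 p)) *\<^sub>R fst p
                     - sqrt (enn2real (RN_deriv \<gamma> \<gamma>1 p)) *\<^sub>R snd p))\<^sup>2) \<partial>\<gamma>)"

text \<open>WFR(mu,nu): infimum over (gamma0,gamma1) in Gamma(mu,nu) and over all sigma-finite
  measures gamma on S^2 x S^2 dominating both gamma0 and gamma1 (the cost does not depend
  on the choice of gamma), then a square root.\<close>
definition WFR :: "(real^3) measure \<Rightarrow> (real^3) measure \<Rightarrow> real" where
  "WFR \<mu> \<nu> = sqrt (enn2real (INF (\<gamma>, \<gamma>0, \<gamma>1) \<in>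
      {(\<gamma>, \<gamma>0, \<gamma>1). (\<gamma>0, \<gamma>1) \<in> Gamma \<mu> \<nu> \<and>
         sets \<gamma> = sets (S2B \<Otimes>\<^sub>M S2B) \<and> sigma_finite_measure \<gamma> \<and>
         absolutely_continuous \<gamma> \<gamma>0 \<and> absolutely_continuous \<gamma> \<gamma>1}.
      wfr_cost \<gamma> \<gamma>0 \<gamma>1))"

definition Aset :: "nat \<Rightarrow> nat \<Rightarrow> (nat \<Rightarrow> real) \<Rightarrow> (nat \<Rightarrow> real)
    \<Rightarrow> ((nat \<Rightarrow> nat \<Rightarrow> real) \<times> (nat \<Rightarrow> nat \<Rightarrow> real)) set" where
  "Aset m n a b = {(A, B).
      (\<forall>i\<in>{0..m}. \<forall>j\<in>{0..n}. A i j \<ge> 0 \<and> B i j \<ge> 0) \<and>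
      (\<forall>i\<in>{1..m}. a i = (\<Sum>j=0..n. A i j)) \<and>
      (\<forall>j\<in>{0..n}. A 0 j = 0) \<and>
      (\<forall>j\<in>{1..n}. b j = (\<Sum>i=0..m. B i j)) \<and>
      (\<forall>i\<in>{0..m}. B i 0 = 0)}"

definition e1 :: "real^3" where
  "e1 = vector [1, 0, 0]"

end

theory Submission
  imports Defs
begin

(* Fix a plan (gamma0, gamma1) dominated by gamma, with marginals mu = sum_i a_i delta(u_i) and
   nu = sum_j b_j delta(v_j). Then gamma0 lives on {u_i} x S^2 and gamma1 on S^2 x {v_j}. On an atom p of
   the finite grid {(u_i, v_j)} the integrand times gamma{p} is |sqrt(gamma0{p}) u_i - sqrt(gamma1{p}) v_j|^2,
   by homogeneity; off the grid one of the two densities vanishes and, the points being unit vectors, the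
   integrand is the other density. Recording the atom masses in A_ij, B_ij (i, j >= 1) and the masses off
   the grid in column 0 of A and row 0 of B, the cost of the plan becomes exactly the matrix cost, whose
   terms in row and column 0 reduce to A_i0 and B_0j. Conversely every matrix pair is realised by discrete
   plans putting the leftover masses at points off the grid, so both infima run over the same values. *)

lemma sum_atLeast0_atMost:
  fixes f :: "nat \<Rightarrow> 'a::comm_monoid_add"
  shows "(\<Sum>i=0..m. f i) = f 0 + (\<Sum>i=1..m. f i)"
  using sum.atLeast_Suc_atMost[of "0::nat" m f] by simp

lemma inj_on_extend_at_0:
  fixes f :: "nat \<Rightarrow> 'a"
  assumes "inj_on f {1..n}" "x \<notin> f ` {1..n}"
  shows "inj_on (\<lambda>j. if j = 0 then x else f j) {0..n}"
proof -
  have "(\<lambda>j. if j = 0 then x else f j) ` {1..n} = f ` {1..n}"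
    by (rule image_cong) auto
  moreover have "inj_on (\<lambda>j. if j = 0 then x else f j) {1..n}"
    using assms(1) by (rule inj_on_cong[THEN iffD2, rotated]) auto
  moreover have "{0..n} = insert 0 {1..n}"
    by auto
  ultimately show ?thesis
    using assms(2) by (simp add: inj_on_insert)
qed

lemma INF_ennreal:
  fixes f :: "'a \<Rightarrow> real"
  assumes "P \<noteq> {}" "\<And>p. p \<in> P \<Longrightarrow> 0 \<le> f p"
  shows "(INF p\<in>P. ennreal (f p)) = ennreal (INF p\<in>P. f p)"
proof -
  have "mono ennreal" by (auto intro: monoI ennreal_leI)
  moreover have "bdd_below (f ` P)" using assms(2) by (intro bdd_belowI[where m = 0]) auto
  ultimately show ?thesis
    using assms(1) by (subst continuous_at_Inf_mono[of ennreal])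
      (auto simp: image_image intro: continuous_at_imp_continuous_at_within continuous_on_ennreal)
qed

lemma norm_sqrt_diff_sq_eq_add:
  fixes x y :: "'a::real_normed_vector"
  assumes "norm x = 1" "norm y = 1" "s = 0 \<or> t = 0" "0 \<le> s" "0 \<le> t"
  shows "(norm (sqrt s *\<^sub>R x - sqrt t *\<^sub>R y))\<^sup>2 = s + t"
  using assms by auto

lemma norm_sqrt_diff_sq_mult:
  fixes x y :: "'a::real_normed_vector"
  assumes "m0 = f0 * c" "m1 = f1 * c" "m0 \<noteq> \<infinity>" "m1 \<noteq> \<infinity>"
  shows "ennreal ((norm (sqrt (enn2real f0) *\<^sub>R x - sqrt (enn2real f1) *\<^sub>R y))\<^sup>2) * c
       = ennreal ((norm (sqrt (enn2real m0) *\<^sub>R x - sqrt (enn2real m1) *\<^sub>R y))\<^sup>2)"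
proof (cases c rule: ennreal_cases)
  case (real r)
  show ?thesis
  proof (cases "r = 0")
    case False
    then have "f0 \<noteq> \<infinity>" "f1 \<noteq> \<infinity>"
      using assms real by (auto simp: ennreal_mult_eq_top_iff)
    then obtain r0 r1 where r01: "f0 = ennreal r0" "f1 = ennreal r1" "0 \<le> r0" "0 \<le> r1"
      by (cases f0 rule: ennreal_cases; cases f1 rule: ennreal_cases) auto
    have "sqrt (r0 * r) *\<^sub>R x - sqrt (r1 * r) *\<^sub>R y = sqrt r *\<^sub>R (sqrt r0 *\<^sub>R x - sqrt r1 *\<^sub>R y)"
      by (simp add: real_sqrt_mult scaleR_right_diff_distrib mult.commute)
    then show ?thesis
      using assms(1,2) real r01
      by (simp add: ennreal_mult[symmetric] power_mult_distrib mult.commute del: ennreal_mult)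
  qed (use assms real in simp)
next
  case top
  then have "f0 = 0" "f1 = 0"
    using assms by (auto simp: ennreal_mult_eq_top_iff)
  then show ?thesis
    using assms top by simp
qed

section \<open>Finite discrete measures\<close>

\<comment> \<open>The measure \<open>\<Sum>k\<in>K. w k \<cdot> \<delta>\<^bsub>\<psi> k\<^esub>\<close> on \<open>M\<close>; negative weights count as 0.\<close>
definition discrete_measure :: "'b measure \<Rightarrow> 'k set \<Rightarrow> ('k \<Rightarrow> real) \<Rightarrow> ('k \<Rightarrow> 'b) \<Rightarrow> 'b measure" where
  "discrete_measure M K w \<psi> = distr (density (count_space K) (\<lambda>k. ennreal (w k))) M \<psi>"

lemma sets_discrete_measure [simp, measurable_cong]: "sets (discrete_measure M K w \<psi>) = sets M"
  by (simp add: discrete_measure_def)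

lemma space_discrete_measure [simp]: "space (discrete_measure M K w \<psi>) = space M"
  by (simp add: discrete_measure_def)

lemma emeasure_discrete_measure:
  assumes "finite K" "\<psi> ` K \<subseteq> space M" "X \<in> sets M"
  shows "emeasure (discrete_measure M K w \<psi>) X = (\<Sum>k\<in>K. ennreal (w k) * indicator X (\<psi> k))"
proof -
  have "\<psi> \<in> measurable (density (count_space K) (\<lambda>k. ennreal (w k))) M"
    using assms(2) by (auto simp: measurable_count_space_eq1)
  then have "emeasure (discrete_measure M K w \<psi>) X
      = (\<integral>\<^sup>+k. ennreal (w k) * indicator (\<psi> -` X \<inter> K) k \<partial>count_space K)"
    using assms(3) by (simp add: discrete_measure_def emeasure_distr emeasure_density)
  also have "\<dots> = (\<Sum>k\<in>K. ennreal (w k) * indicator X (\<psi> k))"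
    using assms(1) by (auto simp: nn_integral_count_space_finite intro!: sum.cong split: split_indicator)
  finally show ?thesis .
qed

lemma sum_ennreal_indicator:
  assumes "\<And>k. k \<in> K \<Longrightarrow> 0 \<le> w k"
  shows "(\<Sum>k\<in>K. ennreal (w k) * indicator X (\<psi> k)) = ennreal (\<Sum>k\<in>K. w k * indicator X (\<psi> k))"
proof -
  have "(\<Sum>k\<in>K. ennreal (w k) * indicator X (\<psi> k)) = (\<Sum>k\<in>K. ennreal (w k * indicator X (\<psi> k)))"
    by (intro sum.cong) (auto split: split_indicator)
  also have "\<dots> = ennreal (\<Sum>k\<in>K. w k * indicator X (\<psi> k))"
    using assms by (intro sum_ennreal) auto
  finally show ?thesis .
qed

lemma measure_discrete_measure:
  assumes "finite K" "\<And>k. k \<in> K \<Longrightarrow> 0 \<le> w k" "\<psi> ` K \<subseteq> space M" "X \<in> sets M"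
  shows "measure (discrete_measure M K w \<psi>) X = (\<Sum>k\<in>K. w k * indicator X (\<psi> k))"
proof -
  have "emeasure (discrete_measure M K w \<psi>) X = ennreal (\<Sum>k\<in>K. w k * indicator X (\<psi> k))"
    by (simp only: emeasure_discrete_measure[OF assms(1,3,4)] sum_ennreal_indicator[OF assms(2)])
  then show ?thesis
    using assms(2) by (simp add: measure_def sum_nonneg)
qed

lemma finite_measure_discrete_measure:
  assumes "finite K" "\<psi> ` K \<subseteq> space M"
  shows "finite_measure (discrete_measure M K w \<psi>)"
  by (rule finite_measureI) (simp add: emeasure_discrete_measure assms ennreal_mult_eq_top_iff)

lemma measure_discrete_measure_singleton:
  assumes "finite K" "\<And>k. k \<in> K \<Longrightarrow> 0 \<le> w k" "\<psi> ` K \<subseteq> space M"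
    and "inj_on \<psi> K" "k \<in> K" "{\<psi> k} \<in> sets M"
  shows "measure (discrete_measure M K w \<psi>) {\<psi> k} = w k"
proof -
  have "(\<Sum>k'\<in>K. w k' * indicator {\<psi> k} (\<psi> k')) = (\<Sum>k'\<in>K. if k' = k then w k else 0)"
    using assms(4,5) by (intro sum.cong) (auto dest: inj_onD split: split_indicator)
  then show ?thesis
    using assms by (simp add: measure_discrete_measure)
qed

lemma distr_discrete_measure:
  assumes "f \<in> measurable M N" "\<psi> ` K \<subseteq> space M"
  shows "distr (discrete_measure M K w \<psi>) N f = discrete_measure N K w (f \<circ> \<psi>)"
  unfolding discrete_measure_def
  using assms by (intro distr_distr) (auto simp: measurable_count_space_eq1)

lemma discrete_measure_cong:
  assumes "\<And>k. k \<in> K \<Longrightarrow> w k = w' k"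
  shows "discrete_measure M K w \<psi> = discrete_measure M K w' \<psi>"
  unfolding discrete_measure_def using assms
  by (intro arg_cong[where f = "\<lambda>D. distr D M \<psi>"] density_cong) (auto simp: AE_count_space)

lemma distr_fst_discrete_measure:
  assumes "finite I" "finite J" "\<And>i j. i \<in> I \<Longrightarrow> j \<in> J \<Longrightarrow> 0 \<le> A i j"
    and "f ` I \<subseteq> space M" "g ` J \<subseteq> space N"
  shows "distr (discrete_measure (M \<Otimes>\<^sub>M N) (I \<times> J) (case_prod A) (map_prod f g)) M fst
    = discrete_measure M I (\<lambda>i. \<Sum>j\<in>J. A i j) f" (is "?D = ?E")
proof (rule measure_eqI)
  fix X assume "X \<in> sets ?D"
  then have X: "X \<in> sets M" by simp
  have "map_prod f g ` (I \<times> J) \<subseteq> space (M \<Otimes>\<^sub>M N)"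
    using assms(4,5) by (auto simp: space_pair_measure)
  then have "emeasure ?D X
      = (\<Sum>k\<in>I \<times> J. ennreal (case_prod A k) * indicator X ((fst \<circ> map_prod f g) k))"
    using assms(1,2,4,5) X by (simp add: distr_discrete_measure emeasure_discrete_measure image_subset_iff)
  also have "\<dots> = (\<Sum>i\<in>I. (\<Sum>j\<in>J. ennreal (A i j)) * indicator X (f i))"
    by (simp only: sum.cartesian_product' sum_distrib_right comp_def map_prod_simp fst_conv case_prod_conv)
  also have "\<dots> = emeasure ?E X"
    using assms X by (simp add: emeasure_discrete_measure sum_ennreal)
  finally show "emeasure ?D X = emeasure ?E X" .
qed simp

lemma distr_snd_discrete_measure:
  assumes "finite I" "finite J" "\<And>i j. i \<in> I \<Longrightarrow> j \<in> J \<Longrightarrow> 0 \<le> A i j"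
    and "f ` I \<subseteq> space M" "g ` J \<subseteq> space N"
  shows "distr (discrete_measure (M \<Otimes>\<^sub>M N) (I \<times> J) (case_prod A) (map_prod f g)) N snd
    = discrete_measure N J (\<lambda>j. \<Sum>i\<in>I. A i j) g" (is "?D = ?E")
proof (rule measure_eqI)
  fix X assume "X \<in> sets ?D"
  then have X: "X \<in> sets N" by simp
  have "map_prod f g ` (I \<times> J) \<subseteq> space (M \<Otimes>\<^sub>M N)"
    using assms(4,5) by (auto simp: space_pair_measure)
  then have "emeasure ?D X
      = (\<Sum>k\<in>I \<times> J. ennreal (case_prod A k) * indicator X ((snd \<circ> map_prod f g) k))"
    using assms(1,2,4,5) X by (simp add: distr_discrete_measure emeasure_discrete_measure image_subset_iff)
  also have "\<dots> = (\<Sum>j\<in>J. (\<Sum>i\<in>I. ennreal (A i j)) * indicator X (g j))"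
    by (simp only: sum.cartesian_product' sum.swap[of _ I] sum_distrib_right comp_def map_prod_simp
        snd_conv case_prod_conv)
  also have "\<dots> = emeasure ?E X"
    using assms X by (simp add: emeasure_discrete_measure sum_ennreal)
  finally show "emeasure ?D X = emeasure ?E X" .
qed simp

lemma measure_eq_discrete_measure:
  assumes "sets N = sets M" "finite K" "\<psi> ` K \<subseteq> space M"
    and "\<And>X. X \<in> sets M \<Longrightarrow> emeasure N X = (\<Sum>k\<in>K. ennreal (w k) * indicator X (\<psi> k))"
  shows "N = discrete_measure M K w \<psi>"
  using assms by (intro measure_eqI) (simp_all add: emeasure_discrete_measure)

lemma absolutely_continuous_discrete_measure:
  assumes "finite K" "finite Q" "\<psi> ` K \<subseteq> Q" "Q \<subseteq> space M"
  shows "absolutely_continuous (discrete_measure M Q (\<lambda>_. 1) id) (discrete_measure M K w \<psi>)"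
  unfolding absolutely_continuous_def
proof
  fix X assume X: "X \<in> null_sets (discrete_measure M Q (\<lambda>_. 1) id)"
  then have Xs: "X \<in> sets M" and "emeasure (discrete_measure M Q (\<lambda>_. 1) id) X = 0"
    by auto
  then have "(\<Sum>q\<in>Q. indicator X q :: ennreal) = 0"
    using assms(2,4) by (simp add: emeasure_discrete_measure)
  then have Q_X: "\<forall>q\<in>Q. q \<notin> X"
    using assms(2) by (simp add: sum_eq_0_iff indicator_eq_0_iff)
  have "emeasure (discrete_measure M K w \<psi>) X = (\<Sum>k\<in>K. ennreal (w k) * indicator X (\<psi> k))"
    using assms(1,3,4) Xs by (intro emeasure_discrete_measure) auto
  also have "\<dots> = 0"
    using Q_X assms(3) by (auto intro!: sum.neutral)
  finally have "emeasure (discrete_measure M K w \<psi>) X = 0" .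
  then show "X \<in> null_sets (discrete_measure M K w \<psi>)"
    using Xs by (simp add: null_sets_def)
qed

section \<open>Densities and atoms\<close>

context sigma_finite_measure
begin

lemma emeasure_eq_nn_integral_RN_deriv:
  assumes "absolutely_continuous M N" "sets N = sets M" "X \<in> sets M"
  shows "emeasure N X = (\<integral>\<^sup>+x. RN_deriv M N x * indicator X x \<partial>M)"
  using RN_deriv_nn_integral[OF assms(1,2), of "indicator X"] assms(2,3) by simp

lemma AE_RN_deriv_eq_0:
  assumes "absolutely_continuous M N" "sets N = sets M" "X \<in> sets M" "emeasure N X = 0"
  shows "AE x in M. x \<in> X \<longrightarrow> RN_deriv M N x = 0"
proof -
  have "AE x in M. RN_deriv M N x * indicator X x = 0"
    using assms by (subst nn_integral_0_iff_AE[symmetric]) (simp_all add: emeasure_eq_nn_integral_RN_deriv)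
  then show ?thesis
    by eventually_elim (auto split: split_indicator)
qed

lemma emeasure_eq_nn_integral_enn2real_RN_deriv:
  assumes "finite_measure N" "absolutely_continuous M N" "sets N = sets M" "X \<in> sets M"
  shows "emeasure N X = (\<integral>\<^sup>+x. ennreal (enn2real (RN_deriv M N x)) * indicator X x \<partial>M)"
proof -
  have "AE x in M. RN_deriv M N x \<noteq> \<infinity>"
    using assms(1-3) by (intro RN_deriv_finite) (auto simp: finite_measure_def)
  then have "(\<integral>\<^sup>+x. ennreal (enn2real (RN_deriv M N x)) * indicator X x \<partial>M)
      = (\<integral>\<^sup>+x. RN_deriv M N x * indicator X x \<partial>M)"
    by (intro nn_integral_cong_AE) (auto simp: less_top)
  then show ?thesis
    using assms(2-4) by (simp add: emeasure_eq_nn_integral_RN_deriv)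
qed

end

lemma nn_integral_split_atoms:
  assumes "finite P" "\<And>p. p \<in> P \<Longrightarrow> {p} \<in> sets M" and [measurable]: "h \<in> borel_measurable M"
  shows "integral\<^sup>N M h = (\<integral>\<^sup>+x. h x * indicator (space M - P) x \<partial>M) + (\<Sum>p\<in>P. h p * emeasure M {p})"
proof -
  have [measurable]: "P \<in> sets M"
    using assms(1,2) sets.finite_UN[of P "\<lambda>p. {p}" M] by simp
  have "integral\<^sup>N M h = (\<integral>\<^sup>+x. h x * indicator (space M - P) x + h x * indicator P x \<partial>M)"
    by (intro nn_integral_cong) (simp split: split_indicator)
  also have "\<dots> = (\<integral>\<^sup>+x. h x * indicator (space M - P) x \<partial>M) + (\<integral>\<^sup>+x. h x * indicator P x \<partial>M)"
    by (intro nn_integral_add) auto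
  also have "(\<integral>\<^sup>+x. h x * indicator P x \<partial>M) = (\<Sum>p\<in>P. h p * emeasure M {p})"
    using assms(1,2) by (rule nn_integral_indicator_finite)
  finally show ?thesis .
qed

abbreviation S2B2 :: "((real^3) \<times> (real^3)) measure" where
  "S2B2 \<equiv> S2B \<Otimes>\<^sub>M S2B"

lemma space_S2B [simp]: "space S2B = S2"
  by (simp add: S2B_def space_restrict_space)

lemma space_S2B2 [simp]: "space S2B2 = S2 \<times> S2"
  by (simp add: space_pair_measure)

lemma norm_S2: "x \<in> S2 \<Longrightarrow> norm x = 1"
  by (simp add: S2_def)

lemma sets_S2B_iff: "X \<in> sets S2B \<longleftrightarrow> X \<subseteq> S2 \<and> X \<in> sets borel"
  unfolding S2B_def S2_def
  by (metis borel_closed closed_sphere sets.Int_space_eq2 sets_restrict_space_iff space_borel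
      space_restrict_space Int_absorb2 sets.sets_into_space inf_top_right)

lemma finite_sets_S2B: "finite X \<Longrightarrow> X \<subseteq> S2 \<Longrightarrow> X \<in> sets S2B"
  by (simp add: sets_S2B_iff finite_imp_closed borel_closed)

lemma finite_sets_S2B2: "finite P \<Longrightarrow> P \<subseteq> S2 \<times> S2 \<Longrightarrow> P \<in> sets S2B2"
proof (induction P rule: finite_induct)
  case (insert p P)
  have "{p} = {fst p} \<times> {snd p}" by auto
  moreover have "{fst p} \<in> sets S2B" "{snd p} \<in> sets S2B"
    using insert.prems by (auto intro!: finite_sets_S2B)
  ultimately have "{p} \<in> sets S2B2" by (metis pair_measureI)
  then show ?case using insert by (metis insert_is_Un insert_subset sets.Un)
qed simp

lemma S2_infinite: "infinite S2"
proof
  assume "finite S2"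
  moreover have "connected S2" unfolding S2_def by (rule connected_sphere) simp
  moreover have "e1 \<in> S2" "- e1 \<in> S2"
    by (auto simp: S2_def e1_def norm_vec_def L2_set_def vector_def sum_3)
  moreover have "e1 \<noteq> - e1"
  proof
    assume "e1 = - e1"
    then have "e1 $ 1 = - (e1 $ 1)" by (metis vector_uminus_component)
    then show False by (simp add: e1_def vector_def)
  qed
  ultimately show False using connected_finite_iff_sing by (metis empty_iff singletonD)
qed

lemma measurable_fst_S2B2 [measurable]: "(fst :: _ \<Rightarrow> real^3) \<in> borel_measurable S2B2"
  by (rule measurable_compose[OF measurable_fst]) (simp add: S2B_def measurable_restrict_space1)

lemma measurable_snd_S2B2 [measurable]: "(snd :: _ \<Rightarrow> real^3) \<in> borel_measurable S2B2"
  by (rule measurable_compose[OF measurable_snd]) (simp add: S2B_def measurable_restrict_space1)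

lemma S2_in_sets_S2B [simp]: "S2 \<in> sets S2B"
  by (metis sets.top space_S2B)

section \<open>The cost of a dominated plan\<close>

locale wfr_plan = sigma_finite_measure \<gamma>
  for \<gamma> :: "((real^3) \<times> (real^3)) measure" +
  fixes \<gamma>0 \<gamma>1 :: "((real^3) \<times> (real^3)) measure"
  assumes sets_\<gamma>: "sets \<gamma> = sets S2B2"
    and sets_\<gamma>0: "sets \<gamma>0 = sets S2B2" and sets_\<gamma>1: "sets \<gamma>1 = sets S2B2"
    and finite_\<gamma>0: "finite_measure \<gamma>0" and finite_\<gamma>1: "finite_measure \<gamma>1"
    and ac_\<gamma>0: "absolutely_continuous \<gamma> \<gamma>0" and ac_\<gamma>1: "absolutely_continuous \<gamma> \<gamma>1"
begin

lemma space_\<gamma> [simp]: "space \<gamma> = S2 \<times> S2"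
  using sets_eq_imp_space_eq[OF sets_\<gamma>] by simp

declare sets_\<gamma> [measurable_cong]

definition wfr_integrand :: "(real^3) \<times> (real^3) \<Rightarrow> ennreal" where
  "wfr_integrand x = ennreal ((norm (sqrt (enn2real (RN_deriv \<gamma> \<gamma>0 x)) *\<^sub>R fst x
      - sqrt (enn2real (RN_deriv \<gamma> \<gamma>1 x)) *\<^sub>R snd x))\<^sup>2)"

lemma wfr_cost_eq_nn_integral: "wfr_cost \<gamma> \<gamma>0 \<gamma>1 = integral\<^sup>N \<gamma> wfr_integrand"
  by (simp add: wfr_cost_def wfr_integrand_def[abs_def])

lemma measurable_wfr_integrand [measurable]: "wfr_integrand \<in> borel_measurable \<gamma>"
  unfolding wfr_integrand_def by measurable

lemma wfr_integrand_atom: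
  assumes "{p} \<in> sets \<gamma>"
  shows "wfr_integrand p * emeasure \<gamma> {p}
    = ennreal ((norm (sqrt (measure \<gamma>0 {p}) *\<^sub>R fst p - sqrt (measure \<gamma>1 {p}) *\<^sub>R snd p))\<^sup>2)"
  unfolding wfr_integrand_def measure_def
  using assms sets_\<gamma>0 sets_\<gamma>1 sets_\<gamma> ac_\<gamma>0 ac_\<gamma>1 finite_measure.emeasure_finite[OF finite_\<gamma>0]
    finite_measure.emeasure_finite[OF finite_\<gamma>1]
  by (intro norm_sqrt_diff_sq_mult RN_deriv_singleton) auto

lemma nn_integral_wfr_integrand_off_atoms:
  assumes "finite U" "U \<subseteq> S2" "finite V" "V \<subseteq> S2"
    and null0: "emeasure \<gamma>0 ((S2 - U) \<times> S2) = 0" and null1: "emeasure \<gamma>1 (S2 \<times> (S2 - V)) = 0"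
  shows "(\<integral>\<^sup>+x. wfr_integrand x * indicator (S2 \<times> S2 - U \<times> V) x \<partial>\<gamma>)
    = ennreal (measure \<gamma>0 (S2 \<times> S2 - U \<times> V)) + ennreal (measure \<gamma>1 (S2 \<times> S2 - U \<times> V))"
proof -
  let ?R = "S2 \<times> S2 - U \<times> V" and ?F0 = "RN_deriv \<gamma> \<gamma>0" and ?F1 = "RN_deriv \<gamma> \<gamma>1"
  have rest [measurable]: "?R \<in> sets \<gamma>"
    using assms(1-4) by (metis finite_SigmaI finite_sets_S2B2 Sigma_mono sets.compl_sets space_\<gamma> sets_\<gamma> space_S2B2)
  have "S2 - U \<in> sets S2B" "S2 - V \<in> sets S2B"
    using assms(1-4) by (metis finite_sets_S2B sets.compl_sets space_S2B)+
  then have "(S2 - U) \<times> S2 \<in> sets \<gamma>" "S2 \<times> (S2 - V) \<in> sets \<gamma>"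
    by (auto simp: sets_\<gamma> intro!: pair_measureI)
  then have "AE x in \<gamma>. x \<in> (S2 - U) \<times> S2 \<longrightarrow> ?F0 x = 0" "AE x in \<gamma>. x \<in> S2 \<times> (S2 - V) \<longrightarrow> ?F1 x = 0"
    using null0 null1 sets_\<gamma>0 sets_\<gamma>1 sets_\<gamma> ac_\<gamma>0 ac_\<gamma>1 by (auto intro!: AE_RN_deriv_eq_0)
  \<comment> \<open>off the grid one density vanishes; the points being unit vectors, the integrand is the other one\<close>
  then have "AE x in \<gamma>. wfr_integrand x * indicator ?R x
      = ennreal (enn2real (?F0 x)) * indicator ?R x + ennreal (enn2real (?F1 x)) * indicator ?R x"
  proof eventually_elim
    case (elim x)
    show ?case
    proof (cases "x \<in> ?R")
      case True
      then have "enn2real (?F0 x) = 0 \<or> enn2real (?F1 x) = 0"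
        using elim by (cases x) auto
      then show ?thesis
        using True by (cases x) (simp add: wfr_integrand_def norm_S2 norm_sqrt_diff_sq_eq_add)
    qed simp
  qed
  then have "(\<integral>\<^sup>+x. wfr_integrand x * indicator ?R x \<partial>\<gamma>)
      = (\<integral>\<^sup>+x. ennreal (enn2real (?F0 x)) * indicator ?R x + ennreal (enn2real (?F1 x)) * indicator ?R x \<partial>\<gamma>)"
    by (rule nn_integral_cong_AE)
  also have "\<dots> = (\<integral>\<^sup>+x. ennreal (enn2real (?F0 x)) * indicator ?R x \<partial>\<gamma>)
      + (\<integral>\<^sup>+x. ennreal (enn2real (?F1 x)) * indicator ?R x \<partial>\<gamma>)"
    by (rule nn_integral_add) auto
  also have "\<dots> = emeasure \<gamma>0 ?R + emeasure \<gamma>1 ?R"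
    using rest sets_\<gamma>0 sets_\<gamma>1 sets_\<gamma> ac_\<gamma>0 ac_\<gamma>1 finite_\<gamma>0 finite_\<gamma>1
    by (simp add: emeasure_eq_nn_integral_enn2real_RN_deriv)
  finally show ?thesis
    by (simp add: finite_measure.emeasure_eq_measure[OF finite_\<gamma>0] finite_measure.emeasure_eq_measure[OF finite_\<gamma>1])
qed

lemma wfr_cost_atoms:
  assumes "finite U" "U \<subseteq> S2" "finite V" "V \<subseteq> S2"
    and "emeasure \<gamma>0 ((S2 - U) \<times> S2) = 0" "emeasure \<gamma>1 (S2 \<times> (S2 - V)) = 0"
  shows "wfr_cost \<gamma> \<gamma>0 \<gamma>1 = ennreal (measure \<gamma>0 (S2 \<times> S2 - U \<times> V) + measure \<gamma>1 (S2 \<times> S2 - U \<times> V)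
     + (\<Sum>p\<in>U \<times> V. (norm (sqrt (measure \<gamma>0 {p}) *\<^sub>R fst p - sqrt (measure \<gamma>1 {p}) *\<^sub>R snd p))\<^sup>2))"
proof -
  have atoms: "{p} \<in> sets \<gamma>" if "p \<in> U \<times> V" for p
    using that assms(2,4) by (auto simp: sets_\<gamma> intro!: finite_sets_S2B2)
  have "wfr_cost \<gamma> \<gamma>0 \<gamma>1
      = (\<integral>\<^sup>+x. wfr_integrand x * indicator (S2 \<times> S2 - U \<times> V) x \<partial>\<gamma>) + (\<Sum>p\<in>U \<times> V. wfr_integrand p * emeasure \<gamma> {p})"
    unfolding wfr_cost_eq_nn_integral using assms(1,3) atoms by (subst nn_integral_split_atoms) auto
  then show ?thesis
    using assms atoms by (simp add: nn_integral_wfr_integrand_off_atoms wfr_integrand_atom sum_nonneg)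
qed

end

section \<open>Plans with atomic marginals and matrix pairs\<close>

definition wfr_plans :: "(real^3) measure \<Rightarrow> (real^3) measure \<Rightarrow> (((real^3) \<times> (real^3)) measure
    \<times> ((real^3) \<times> (real^3)) measure \<times> ((real^3) \<times> (real^3)) measure) set" where
  "wfr_plans \<mu> \<nu> = {(\<gamma>, \<gamma>0, \<gamma>1). (\<gamma>0, \<gamma>1) \<in> Gamma \<mu> \<nu> \<and> sets \<gamma> = sets S2B2 \<and>
     sigma_finite_measure \<gamma> \<and> absolutely_continuous \<gamma> \<gamma>0 \<and> absolutely_continuous \<gamma> \<gamma>1}"

lemma WFR_eq_INF_wfr_plans:
  "WFR \<mu> \<nu> = sqrt (enn2real (INF (\<gamma>, \<gamma>0, \<gamma>1) \<in> wfr_plans \<mu> \<nu>. wfr_cost \<gamma> \<gamma>0 \<gamma>1))"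
  unfolding WFR_def wfr_plans_def ..

lemma wfr_plans_iff:
  "(\<gamma>, \<gamma>0, \<gamma>1) \<in> wfr_plans \<mu> \<nu> \<longleftrightarrow>
     wfr_plan \<gamma> \<gamma>0 \<gamma>1 \<and> distr \<gamma>0 S2B fst = \<mu> \<and> distr \<gamma>1 S2B snd = \<nu>"
  by (auto simp: wfr_plans_def Gamma_def wfr_plan_def wfr_plan_axioms_def)

lemma emeasure_times_S2:
  assumes "sets M = sets S2B2" "X \<in> sets S2B"
  shows "emeasure M (X \<times> S2) = emeasure (distr M S2B fst) X"
    and "emeasure M (S2 \<times> X) = emeasure (distr M S2B snd) X"
proof -
  have "X \<subseteq> S2" using sets.sets_into_space[OF assms(2)] by simp
  moreover have "space M = S2 \<times> S2" using sets_eq_imp_space_eq[OF assms(1)] by simp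
  moreover note measurable_cong_sets[OF assms(1) refl, measurable_cong]
  ultimately show "emeasure M (X \<times> S2) = emeasure (distr M S2B fst) X"
    and "emeasure M (S2 \<times> X) = emeasure (distr M S2B snd) X"
    using assms(2) by (auto simp: emeasure_distr intro!: arg_cong[where f = "emeasure M"])
qed

definition matrix_cost :: "nat \<Rightarrow> nat \<Rightarrow> (nat \<Rightarrow> real^3) \<Rightarrow> (nat \<Rightarrow> real^3)
    \<Rightarrow> (nat \<Rightarrow> nat \<Rightarrow> real) \<Rightarrow> (nat \<Rightarrow> nat \<Rightarrow> real) \<Rightarrow> real" where
  "matrix_cost m n u v A B = (\<Sum>i=0..m. \<Sum>j=0..n. (norm (sqrt (A i j) *\<^sub>R u i - sqrt (B i j) *\<^sub>R v j))\<^sup>2)"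

lemma AsetD:
  assumes "(A, B) \<in> Aset m n a b"
  shows "\<And>i j. i \<le> m \<Longrightarrow> j \<le> n \<Longrightarrow> 0 \<le> A i j"
    and "\<And>i j. i \<le> m \<Longrightarrow> j \<le> n \<Longrightarrow> 0 \<le> B i j"
    and "\<And>i. i \<in> {1..m} \<Longrightarrow> a i = A i 0 + (\<Sum>j=1..n. A i j)"
    and "\<And>j. j \<in> {1..n} \<Longrightarrow> b j = B 0 j + (\<Sum>i=1..m. B i j)"
    and "\<And>j. j \<le> n \<Longrightarrow> A 0 j = 0"
    and "\<And>i. i \<le> m \<Longrightarrow> B i 0 = 0"
  using assms by (auto simp: Aset_def sum_atLeast0_atMost)

lemma matrix_cost_split:
  assumes AB: "(A, B) \<in> Aset m n a b" and "u ` {1..m} \<subseteq> S2" "v ` {1..n} \<subseteq> S2"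
  shows "matrix_cost m n u v A B = (\<Sum>i=1..m. A i 0) + (\<Sum>j=1..n. B 0 j)
     + (\<Sum>i=1..m. \<Sum>j=1..n. (norm (sqrt (A i j) *\<^sub>R u i - sqrt (B i j) *\<^sub>R v j))\<^sup>2)"
proof -
  define c where "c i j = (norm (sqrt (A i j) *\<^sub>R u i - sqrt (B i j) *\<^sub>R v j))\<^sup>2" for i j
  have c_col0: "c i 0 = A i 0" if "i \<in> {1..m}" for i
  proof -
    have "norm (u i) = 1" "B i 0 = 0" "0 \<le> A i 0"
      using that assms(2) AsetD[OF AB] by (auto simp: image_subset_iff norm_S2)
    then show ?thesis by (simp add: c_def)
  qed
  have c_row0: "c 0 j = B 0 j" if "j \<in> {1..n}" for j
  proof -
    have "norm (v j) = 1" "A 0 j = 0" "0 \<le> B 0 j"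
      using that assms(3) AsetD[OF AB] by (auto simp: image_subset_iff norm_S2)
    then show ?thesis by (simp add: c_def)
  qed
  have "c 0 0 = 0"
    using AsetD(5,6)[OF AB] by (simp add: c_def)
  then have "matrix_cost m n u v A B = (\<Sum>j=1..n. c 0 j) + (\<Sum>i=1..m. c i 0 + (\<Sum>j=1..n. c i j))"
    unfolding matrix_cost_def c_def[symmetric] by (simp only: sum_atLeast0_atMost add_0_left)
  also have "\<dots> = (\<Sum>j=1..n. B 0 j) + ((\<Sum>i=1..m. A i 0) + (\<Sum>i=1..m. \<Sum>j=1..n. c i j))"
    using c_row0 c_col0 by (simp add: sum.distrib)
  finally show ?thesis by (simp add: c_def)
qed

lemma matrix_cost_nonneg: "0 \<le> matrix_cost m n u v A B"
  by (simp add: matrix_cost_def sum_nonneg)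

locale atomic_marginals =
  fixes m n :: nat and a b :: "nat \<Rightarrow> real" and u v :: "nat \<Rightarrow> real^3" and \<mu> \<nu> :: "(real^3) measure"
  assumes u_S2: "u ` {1..m} \<subseteq> S2" and v_S2: "v ` {1..n} \<subseteq> S2"
    and u_inj: "inj_on u {1..m}" and v_inj: "inj_on v {1..n}"
    and a_nonneg: "\<And>i. i \<in> {1..m} \<Longrightarrow> 0 \<le> a i" and b_nonneg: "\<And>j. j \<in> {1..n} \<Longrightarrow> 0 \<le> b j"
    and \<mu>_eq: "\<mu> = discrete_measure S2B {1..m} a u"
    and \<nu>_eq: "\<nu> = discrete_measure S2B {1..n} b v"
begin

lemma Aset_nonempty: "Aset m n a b \<noteq> {}"
proof -
  have "(\<lambda>i j. if j = 0 \<and> 1 \<le> i then a i else 0, \<lambda>i j. if i = 0 \<and> 1 \<le> j then b j else 0) \<in> Aset m n a b"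
    using a_nonneg b_nonneg by (auto simp: Aset_def sum_atLeast0_atMost)
  then show ?thesis by blast
qed

lemma sum_atom_grid:
  "(\<Sum>p\<in>u ` {1..m} \<times> v ` {1..n}. f p) = (\<Sum>i=1..m. \<Sum>j=1..n. f (u i, v j))"
  unfolding map_prod_surj_on[OF refl refl, symmetric] sum.reindex[OF map_prod_inj_on[OF u_inj v_inj]]
  by (simp add: sum.cartesian_product case_prod_unfold map_prod_def)

lemma measure_atom_grid:
  assumes "sets M = sets S2B2" "finite_measure M"
  shows "measure M (u ` {1..m} \<times> v ` {1..n}) = (\<Sum>i=1..m. \<Sum>j=1..n. measure M {(u i, v j)})"
proof -
  have "measure M (u ` {1..m} \<times> v ` {1..n}) = (\<Sum>p\<in>u ` {1..m} \<times> v ` {1..n}. measure M {p})"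
    using assms u_S2 v_S2
    by (intro measure_eq_sum_singleton) (auto intro!: finite_sets_S2B2 simp: finite_measure.emeasure_finite)
  then show ?thesis
    by (simp only: sum_atom_grid)
qed

context
  fixes \<gamma> \<gamma>0 \<gamma>1 :: "((real^3) \<times> (real^3)) measure"
  assumes plan: "(\<gamma>, \<gamma>0, \<gamma>1) \<in> wfr_plans \<mu> \<nu>"
begin

interpretation wfr_plan \<gamma> \<gamma>0 \<gamma>1
  using plan by (simp add: wfr_plans_iff)

interpretation \<gamma>0: finite_measure \<gamma>0
  by (rule finite_\<gamma>0)

interpretation \<gamma>1: finite_measure \<gamma>1
  by (rule finite_\<gamma>1)

lemma measure_times_S2:
  assumes "X \<in> sets S2B"
  shows "measure \<gamma>0 (X \<times> S2) = (\<Sum>i=1..m. a i * indicator X (u i))"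
proof -
  have "measure \<gamma>0 (X \<times> S2) = measure \<mu> X"
    using plan assms emeasure_times_S2(1)[OF sets_\<gamma>0] by (simp add: measure_def wfr_plans_iff)
  also have "\<dots> = (\<Sum>i=1..m. a i * indicator X (u i))"
    unfolding \<mu>_eq using assms u_S2 a_nonneg by (intro measure_discrete_measure) auto
  finally show ?thesis .
qed

lemma measure_S2_times:
  assumes "X \<in> sets S2B"
  shows "measure \<gamma>1 (S2 \<times> X) = (\<Sum>j=1..n. b j * indicator X (v j))"
proof -
  have "measure \<gamma>1 (S2 \<times> X) = measure \<nu> X"
    using plan assms emeasure_times_S2(2)[OF sets_\<gamma>1] by (simp add: measure_def wfr_plans_iff)
  also have "\<dots> = (\<Sum>j=1..n. b j * indicator X (v j))"
    unfolding \<nu>_eq using assms v_S2 b_nonneg by (intro measure_discrete_measure) auto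
  finally show ?thesis .
qed

lemma wfr_cost_eq_matrix_cost:
  assumes AB: "(A, B) \<in> Aset m n a b"
    and atoms0: "\<And>i j. i \<in> {1..m} \<Longrightarrow> j \<in> {1..n} \<Longrightarrow> measure \<gamma>0 {(u i, v j)} = A i j"
    and atoms1: "\<And>i j. i \<in> {1..m} \<Longrightarrow> j \<in> {1..n} \<Longrightarrow> measure \<gamma>1 {(u i, v j)} = B i j"
  shows "wfr_cost \<gamma> \<gamma>0 \<gamma>1 = ennreal (matrix_cost m n u v A B)"
proof -
  let ?U = "u ` {1..m}" and ?V = "v ` {1..n}"
  have grid: "?U \<times> ?V \<subseteq> S2 \<times> S2"
    using u_S2 v_S2 by blast
  have sets_grid: "?U \<times> ?V \<in> sets S2B2" "\<And>p. p \<in> ?U \<times> ?V \<Longrightarrow> {p} \<in> sets S2B2"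
    using grid by (auto intro!: finite_sets_S2B2)
  have "(\<Sum>i=1..m. a i) = (\<Sum>i=1..m. A i 0) + (\<Sum>i=1..m. \<Sum>j=1..n. A i j)"
    using AsetD(3)[OF AB] by (simp add: sum.distrib)
  moreover have "measure \<gamma>0 (S2 \<times> S2) = (\<Sum>i=1..m. a i)"
    unfolding measure_times_S2[OF S2_in_sets_S2B] using u_S2 by (intro sum.cong) (auto simp: image_subset_iff)
  moreover have "measure \<gamma>0 (?U \<times> ?V) = (\<Sum>i=1..m. \<Sum>j=1..n. A i j)"
    unfolding measure_atom_grid[OF sets_\<gamma>0 finite_\<gamma>0] using atoms0 by (intro sum.cong) auto
  ultimately have rest0: "measure \<gamma>0 (S2 \<times> S2 - ?U \<times> ?V) = (\<Sum>i=1..m. A i 0)"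
    using grid sets_grid by (simp add: sets_\<gamma>0 \<gamma>0.finite_measure_Diff)
  have "(\<Sum>j=1..n. b j) = (\<Sum>j=1..n. B 0 j) + (\<Sum>j=1..n. \<Sum>i=1..m. B i j)"
    using AsetD(4)[OF AB] by (simp add: sum.distrib)
  moreover have "measure \<gamma>1 (S2 \<times> S2) = (\<Sum>j=1..n. b j)"
    unfolding measure_S2_times[OF S2_in_sets_S2B] using v_S2 by (intro sum.cong) (auto simp: image_subset_iff)
  moreover have "measure \<gamma>1 (?U \<times> ?V) = (\<Sum>i=1..m. \<Sum>j=1..n. B i j)"
    unfolding measure_atom_grid[OF sets_\<gamma>1 finite_\<gamma>1] using atoms1 by (intro sum.cong) auto
  ultimately have rest1: "measure \<gamma>1 (S2 \<times> S2 - ?U \<times> ?V) = (\<Sum>j=1..n. B 0 j)"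
    using grid sets_grid sum.swap[of "\<lambda>i j. B i j" "{1..n}" "{1..m}"]
    by (simp add: sets_\<gamma>1 \<gamma>1.finite_measure_Diff)
  have "S2 - ?U \<in> sets S2B" "S2 - ?V \<in> sets S2B"
    using u_S2 v_S2 by (metis finite_imageI finite_atLeastAtMost finite_sets_S2B sets.compl_sets space_S2B)+
  then have "emeasure \<gamma>0 ((S2 - ?U) \<times> S2) = 0" "emeasure \<gamma>1 (S2 \<times> (S2 - ?V)) = 0"
    by (simp_all add: \<gamma>0.emeasure_eq_measure \<gamma>1.emeasure_eq_measure measure_times_S2 measure_S2_times)
  then have "wfr_cost \<gamma> \<gamma>0 \<gamma>1 = ennreal (measure \<gamma>0 (S2 \<times> S2 - ?U \<times> ?V) + measure \<gamma>1 (S2 \<times> S2 - ?U \<times> ?V)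
      + (\<Sum>p\<in>?U \<times> ?V. (norm (sqrt (measure \<gamma>0 {p}) *\<^sub>R fst p - sqrt (measure \<gamma>1 {p}) *\<^sub>R snd p))\<^sup>2))"
    using u_S2 v_S2 by (intro wfr_cost_atoms) auto
  also have "(\<Sum>p\<in>?U \<times> ?V. (norm (sqrt (measure \<gamma>0 {p}) *\<^sub>R fst p - sqrt (measure \<gamma>1 {p}) *\<^sub>R snd p))\<^sup>2)
      = (\<Sum>i=1..m. \<Sum>j=1..n. (norm (sqrt (A i j) *\<^sub>R u i - sqrt (B i j) *\<^sub>R v j))\<^sup>2)"
    unfolding sum_atom_grid using atoms0 atoms1 by (intro sum.cong) auto
  finally show ?thesis
    unfolding rest0 rest1 matrix_cost_split[OF AB u_S2 v_S2] .
qed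

lemma sum_row_atoms_le:
  assumes i: "i \<in> {1..m}"
  shows "(\<Sum>j=1..n. measure \<gamma>0 {(u i, v j)}) \<le> a i"
proof -
  have "inj_on (\<lambda>j. (u i, v j)) {1..n}"
    by (rule inj_onI) (simp add: inj_onD[OF v_inj])
  moreover have row: "(\<lambda>j. (u i, v j)) ` {1..n} \<subseteq> {u i} \<times> S2" "{u i} \<in> sets S2B"
    using i u_S2 v_S2 by (auto intro!: finite_sets_S2B)
  ultimately have "(\<Sum>j=1..n. measure \<gamma>0 {(u i, v j)}) = measure \<gamma>0 ((\<lambda>j. (u i, v j)) ` {1..n})"
    using i u_S2 v_S2
    by (subst measure_eq_sum_singleton) (auto simp: sets_\<gamma>0 sum.reindex intro!: finite_sets_S2B2)
  also have "\<dots> \<le> measure \<gamma>0 ({u i} \<times> S2)"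
    using row i u_S2 v_S2 by (intro \<gamma>0.finite_measure_mono) (auto simp: sets_\<gamma>0 intro!: finite_sets_S2B2 pair_measureI)
  also have "\<dots> = (\<Sum>i'=1..m. if i' = i then a i else 0)"
    unfolding measure_times_S2[OF row(2)] using i u_inj by (intro sum.cong) (auto dest: inj_onD split: split_indicator)
  finally show ?thesis
    using i by simp
qed

lemma sum_col_atoms_le:
  assumes j: "j \<in> {1..n}"
  shows "(\<Sum>i=1..m. measure \<gamma>1 {(u i, v j)}) \<le> b j"
proof -
  have "inj_on (\<lambda>i. (u i, v j)) {1..m}"
    by (rule inj_onI) (simp add: inj_onD[OF u_inj])
  moreover have col: "(\<lambda>i. (u i, v j)) ` {1..m} \<subseteq> S2 \<times> {v j}" "{v j} \<in> sets S2B"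
    using j u_S2 v_S2 by (auto intro!: finite_sets_S2B)
  ultimately have "(\<Sum>i=1..m. measure \<gamma>1 {(u i, v j)}) = measure \<gamma>1 ((\<lambda>i. (u i, v j)) ` {1..m})"
    using j u_S2 v_S2
    by (subst measure_eq_sum_singleton) (auto simp: sets_\<gamma>1 sum.reindex intro!: finite_sets_S2B2)
  also have "\<dots> \<le> measure \<gamma>1 (S2 \<times> {v j})"
    using col j u_S2 v_S2 by (intro \<gamma>1.finite_measure_mono) (auto simp: sets_\<gamma>1 intro!: finite_sets_S2B2 pair_measureI)
  also have "\<dots> = (\<Sum>j'=1..n. if j' = j then b j else 0)"
    unfolding measure_S2_times[OF col(2)] using j v_inj by (intro sum.cong) (auto dest: inj_onD split: split_indicator)
  finally show ?thesis
    using j by simp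
qed

lemma matrices_of_plan:
  obtains A B where "(A, B) \<in> Aset m n a b" "wfr_cost \<gamma> \<gamma>0 \<gamma>1 = ennreal (matrix_cost m n u v A B)"
proof -
  define A where "A i j = (if i = 0 then 0 else if j = 0
      then a i - (\<Sum>j'=1..n. measure \<gamma>0 {(u i, v j')}) else measure \<gamma>0 {(u i, v j)})" for i j
  define B where "B i j = (if j = 0 then 0 else if i = 0
      then b j - (\<Sum>i'=1..m. measure \<gamma>1 {(u i', v j)}) else measure \<gamma>1 {(u i, v j)})" for i j
  have "(\<Sum>j=1..n. A i j) = (\<Sum>j=1..n. measure \<gamma>0 {(u i, v j)})" if "i \<noteq> 0" for i
    using that by (intro sum.cong) (auto simp: A_def)
  moreover have "(\<Sum>i=1..m. B i j) = (\<Sum>i=1..m. measure \<gamma>1 {(u i, v j)})" if "j \<noteq> 0" for j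
    using that by (intro sum.cong) (auto simp: B_def)
  ultimately have "(A, B) \<in> Aset m n a b"
    using sum_row_atoms_le sum_col_atoms_le
    by (auto simp: Aset_def sum_atLeast0_atMost) (auto simp: A_def B_def)
  moreover have "wfr_cost \<gamma> \<gamma>0 \<gamma>1 = ennreal (matrix_cost m n u v A B)"
    using calculation by (rule wfr_cost_eq_matrix_cost) (auto simp: A_def B_def)
  ultimately show thesis
    by (rule that)
qed

end

lemma matrix_plan0:
  assumes AB: "(A, B) \<in> Aset m n a b" and w: "w \<in> S2" "w \<notin> v ` {1..n}"
  defines "\<gamma>0 \<equiv> discrete_measure S2B2 ({1..m} \<times> {0..n}) (case_prod A) (map_prod u (\<lambda>j. if j = 0 then w else v j))"
  shows "finite_measure \<gamma>0" and "distr \<gamma>0 S2B fst = \<mu>"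
    and "\<And>i j. i \<in> {1..m} \<Longrightarrow> j \<in> {1..n} \<Longrightarrow> measure \<gamma>0 {(u i, v j)} = A i j"
proof -
  let ?K = "{1..m} \<times> {0..n}" and ?\<psi> = "map_prod u (\<lambda>j. if j = 0 then w else v j)"
  have \<psi>: "?\<psi> ` ?K \<subseteq> space S2B2"
    using u_S2 v_S2 w by (auto simp: image_subset_iff)
  have A: "\<And>k. k \<in> ?K \<Longrightarrow> 0 \<le> case_prod A k"
    using AsetD(1)[OF AB] by auto
  show "finite_measure \<gamma>0"
    unfolding \<gamma>0_def using \<psi> by (intro finite_measure_discrete_measure) auto
  have "distr \<gamma>0 S2B fst = discrete_measure S2B {1..m} (\<lambda>i. \<Sum>j=0..n. A i j) u"
    unfolding \<gamma>0_def using AsetD(1)[OF AB] u_S2 v_S2 w by (intro distr_fst_discrete_measure) auto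
  also have "\<dots> = \<mu>"
    unfolding \<mu>_eq using AsetD(3)[OF AB] by (intro discrete_measure_cong) (simp add: sum_atLeast0_atMost)
  finally show "distr \<gamma>0 S2B fst = \<mu>" .
  have "inj_on ?\<psi> ?K"
    using u_inj v_inj w by (simp add: map_prod_inj_on inj_on_extend_at_0)
  show "measure \<gamma>0 {(u i, v j)} = A i j" if "i \<in> {1..m}" "j \<in> {1..n}" for i j
  proof -
    have "measure \<gamma>0 {?\<psi> (i, j)} = case_prod A (i, j)"
      unfolding \<gamma>0_def using that u_S2 v_S2 \<open>inj_on ?\<psi> ?K\<close>
      by (intro measure_discrete_measure_singleton[OF _ A \<psi>]) (auto intro!: finite_sets_S2B2)
    then show ?thesis
      using that by simp
  qed
qed

lemma matrix_plan1:
  assumes AB: "(A, B) \<in> Aset m n a b" and w': "w' \<in> S2" "w' \<notin> u ` {1..m}"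
  defines "\<gamma>1 \<equiv> discrete_measure S2B2 ({0..m} \<times> {1..n}) (case_prod B) (map_prod (\<lambda>i. if i = 0 then w' else u i) v)"
  shows "finite_measure \<gamma>1" and "distr \<gamma>1 S2B snd = \<nu>"
    and "\<And>i j. i \<in> {1..m} \<Longrightarrow> j \<in> {1..n} \<Longrightarrow> measure \<gamma>1 {(u i, v j)} = B i j"
proof -
  let ?K = "{0..m} \<times> {1..n}" and ?\<psi> = "map_prod (\<lambda>i. if i = 0 then w' else u i) v"
  have \<psi>: "?\<psi> ` ?K \<subseteq> space S2B2"
    using u_S2 v_S2 w' by (auto simp: image_subset_iff)
  have B: "\<And>k. k \<in> ?K \<Longrightarrow> 0 \<le> case_prod B k"
    using AsetD(2)[OF AB] by auto
  show "finite_measure \<gamma>1"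
    unfolding \<gamma>1_def using \<psi> by (intro finite_measure_discrete_measure) auto
  have "distr \<gamma>1 S2B snd = discrete_measure S2B {1..n} (\<lambda>j. \<Sum>i=0..m. B i j) v"
    unfolding \<gamma>1_def using AsetD(2)[OF AB] u_S2 v_S2 w' by (intro distr_snd_discrete_measure) auto
  also have "\<dots> = \<nu>"
    unfolding \<nu>_eq using AsetD(4)[OF AB] by (intro discrete_measure_cong) (simp add: sum_atLeast0_atMost)
  finally show "distr \<gamma>1 S2B snd = \<nu>" .
  have "inj_on ?\<psi> ?K"
    using u_inj v_inj w' by (simp add: map_prod_inj_on inj_on_extend_at_0)
  show "measure \<gamma>1 {(u i, v j)} = B i j" if "i \<in> {1..m}" "j \<in> {1..n}" for i j
  proof -
    have "measure \<gamma>1 {?\<psi> (i, j)} = case_prod B (i, j)"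
      unfolding \<gamma>1_def using that u_S2 v_S2 \<open>inj_on ?\<psi> ?K\<close>
      by (intro measure_discrete_measure_singleton[OF _ B \<psi>]) (auto intro!: finite_sets_S2B2)
    then show ?thesis
      using that by simp
  qed
qed

lemma plan_of_matrices:
  assumes AB: "(A, B) \<in> Aset m n a b"
  obtains \<gamma> \<gamma>0 \<gamma>1 where "(\<gamma>, \<gamma>0, \<gamma>1) \<in> wfr_plans \<mu> \<nu>"
    and "wfr_cost \<gamma> \<gamma>0 \<gamma>1 = ennreal (matrix_cost m n u v A B)"
proof -
  have "infinite (S2 - v ` {1..n})" "infinite (S2 - u ` {1..m})"
    using S2_infinite by (simp_all add: Diff_infinite_finite)
  \<comment> \<open>the leftover masses \<open>A i 0\<close> and \<open>B 0 j\<close> go to \<open>(u i, w)\<close> and \<open>(w', v j)\<close>, off the grid of atoms\<close>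
  then obtain w w' where w: "w \<in> S2" "w \<notin> v ` {1..n}" and w': "w' \<in> S2" "w' \<notin> u ` {1..m}"
    by (metis DiffE all_not_in_conv infinite_imp_nonempty)
  define \<gamma>0 where "\<gamma>0 = discrete_measure S2B2 ({1..m} \<times> {0..n}) (case_prod A) (map_prod u (\<lambda>j. if j = 0 then w else v j))"
  define \<gamma>1 where "\<gamma>1 = discrete_measure S2B2 ({0..m} \<times> {1..n}) (case_prod B) (map_prod (\<lambda>i. if i = 0 then w' else u i) v)"
  define Q where "Q = insert w' (u ` {1..m}) \<times> insert w (v ` {1..n})"
  define \<gamma> where "\<gamma> = discrete_measure S2B2 Q (\<lambda>_. 1) id"
  have Q: "finite Q" "Q \<subseteq> space S2B2"
    using u_S2 v_S2 w w' by (auto simp: Q_def image_subset_iff)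
  have "map_prod u (\<lambda>j. if j = 0 then w else v j) ` ({1..m} \<times> {0..n}) \<subseteq> Q"
    "map_prod (\<lambda>i. if i = 0 then w' else u i) v ` ({0..m} \<times> {1..n}) \<subseteq> Q"
    by (auto simp: Q_def split: if_splits)
  then have "absolutely_continuous \<gamma> \<gamma>0" "absolutely_continuous \<gamma> \<gamma>1"
    unfolding \<gamma>_def \<gamma>0_def \<gamma>1_def using Q by (auto intro!: absolutely_continuous_discrete_measure)
  moreover have "finite_measure \<gamma>"
    unfolding \<gamma>_def using Q by (intro finite_measure_discrete_measure) auto
  ultimately have plan: "(\<gamma>, \<gamma>0, \<gamma>1) \<in> wfr_plans \<mu> \<nu>"
    using matrix_plan0[OF AB w] matrix_plan1[OF AB w']
    by (simp add: wfr_plans_iff wfr_plan_def wfr_plan_axioms_def finite_measure_def \<gamma>_def \<gamma>0_def \<gamma>1_def)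
  have "measure \<gamma>0 {(u i, v j)} = A i j" "measure \<gamma>1 {(u i, v j)} = B i j"
    if "i \<in> {1..m}" "j \<in> {1..n}" for i j
    using that matrix_plan0(3)[OF AB w] matrix_plan1(3)[OF AB w'] by (simp_all add: \<gamma>0_def \<gamma>1_def)
  with plan show thesis
    by (intro that[OF plan] wfr_cost_eq_matrix_cost[OF plan AB])
qed

lemma wfr_costs_eq_matrix_costs:
  "(\<lambda>(\<gamma>, \<gamma>0, \<gamma>1). wfr_cost \<gamma> \<gamma>0 \<gamma>1) ` wfr_plans \<mu> \<nu>
    = (\<lambda>p. ennreal (case_prod (matrix_cost m n u v) p)) ` Aset m n a b"
proof (intro equalityI subsetI)
  fix c assume "c \<in> (\<lambda>(\<gamma>, \<gamma>0, \<gamma>1). wfr_cost \<gamma> \<gamma>0 \<gamma>1) ` wfr_plans \<mu> \<nu>"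
  then obtain \<gamma> \<gamma>0 \<gamma>1 where "(\<gamma>, \<gamma>0, \<gamma>1) \<in> wfr_plans \<mu> \<nu>" "c = wfr_cost \<gamma> \<gamma>0 \<gamma>1"
    by auto
  then show "c \<in> (\<lambda>p. ennreal (case_prod (matrix_cost m n u v) p)) ` Aset m n a b"
    by (elim matrices_of_plan) force
next
  fix c assume "c \<in> (\<lambda>p. ennreal (case_prod (matrix_cost m n u v) p)) ` Aset m n a b"
  then obtain A B where "(A, B) \<in> Aset m n a b" "c = ennreal (matrix_cost m n u v A B)"
    by auto
  then show "c \<in> (\<lambda>(\<gamma>, \<gamma>0, \<gamma>1). wfr_cost \<gamma> \<gamma>0 \<gamma>1) ` wfr_plans \<mu> \<nu>"
    by (elim plan_of_matrices) force
qed

lemma WFR_sq_eq_INF_matrix_cost: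
  "(WFR \<mu> \<nu>)\<^sup>2 = (INF p \<in> Aset m n a b. case_prod (matrix_cost m n u v) p)"
proof -
  have "(INF (\<gamma>, \<gamma>0, \<gamma>1) \<in> wfr_plans \<mu> \<nu>. wfr_cost \<gamma> \<gamma>0 \<gamma>1)
      = ennreal (INF p \<in> Aset m n a b. case_prod (matrix_cost m n u v) p)"
    using wfr_costs_eq_matrix_costs INF_ennreal[OF Aset_nonempty, of "case_prod (matrix_cost m n u v)"]
    by (simp add: matrix_cost_nonneg split: prod.split)
  moreover have "0 \<le> (INF p \<in> Aset m n a b. case_prod (matrix_cost m n u v) p)"
    using Aset_nonempty by (auto intro!: cINF_greatest simp: matrix_cost_nonneg)
  ultimately show ?thesis
    by (simp add: WFR_eq_INF_wfr_plans)
qed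

end

theorem corollary2p6:
  fixes m n :: nat
    and a b :: "nat \<Rightarrow> real"
    and u v :: "nat \<Rightarrow> real^3"
    and \<mu> \<nu> :: "(real^3) measure"
  assumes u_S2: "\<forall>i\<in>{1..m}. u i \<in> S2"
    and v_S2: "\<forall>j\<in>{1..n}. v j \<in> S2"
    and u_inj: "inj_on u {1..m}"
    and v_inj: "inj_on v {1..n}"
    and a_pos: "\<forall>i\<in>{1..m}. a i > 0"
    and b_pos: "\<forall>j\<in>{1..n}. b j > 0"
    and u0: "u 0 = e1"
    and v0: "v 0 = e1"
    and mu_sets: "sets \<mu> = sets S2B"
    and mu_def: "\<forall>X\<in>sets \<mu>. emeasure \<mu> X = (\<Sum>i\<in>{1..m}. ennreal (a i) * indicator X (u i))"
    and nu_sets: "sets \<nu> = sets S2B"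
    and nu_def: "\<forall>X\<in>sets \<nu>. emeasure \<nu> X = (\<Sum>j\<in>{1..n}. ennreal (b j) * indicator X (v j))"
  shows "(WFR \<mu> \<nu>)\<^sup>2 =
    (INF (A, B) \<in> Aset m n a b.
       \<Sum>i=0..m. \<Sum>j=0..n. (norm (sqrt (A i j) *\<^sub>R u i - sqrt (B i j) *\<^sub>R v j))\<^sup>2)"
proof -
  \<comment> \<open>The values \<open>u 0\<close> and \<open>v 0\<close> play no role: row 0 of \<open>A\<close> and column 0 of \<open>B\<close> vanish.\<close>
  interpret atomic_marginals m n a b u v \<mu> \<nu>
  proof
    show "\<mu> = discrete_measure S2B {1..m} a u"
      using mu_sets mu_def u_S2 by (intro measure_eq_discrete_measure) auto
    show "\<nu> = discrete_measure S2B {1..n} b v"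
      using nu_sets nu_def v_S2 by (intro measure_eq_discrete_measure) auto
  qed (use u_S2 v_S2 u_inj v_inj a_pos b_pos in \<open>auto simp: less_eq_real_def\<close>)
  have "(\<lambda>(A, B). \<Sum>i=0..m. \<Sum>j=0..n. (norm (sqrt (A i j) *\<^sub>R u i - sqrt (B i j) *\<^sub>R v j))\<^sup>2)
      = case_prod (matrix_cost m n u v)"
    by (auto simp: matrix_cost_def)
  then show ?thesis
    using WFR_sq_eq_INF_matrix_cost by simp
qed

end
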